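(* Let $\gamma > 1$ and let $m, j_0 \in \mathbb{N}$. Let $p_i$ denote the $i$-th prime and consider the radii $\mathcal{R} = \{r_j\}_{j\in\mathbb{N}}$, $r_j > 0$, defined by $r_j^2 = m + \prod_{j_0 \leq i \leq 2^{j^\gamma}} p_i$. Then the set of all primes can be written as $\mathbb{P} = \mathbb{P}_G \cup \mathbb{P}_B$ such that: for every $p\in\mathbb{P}_G$, $\{r_j^2 \bmod p\} \subset (\mathbb{Z}/p\mathbb{Z})^\times$; for every $\epsilon>0$ there is $C_\epsilon$ independent of $p$ with $\#\{r_j^2 \bmod p : j \in\mathbb{N}\} \leq C_\epsilon p^\epsilon$ (indeed this count is $\lesssim \log p$ for every prime $p$); and $\sum_{p \in \mathbb{P}_B} p^{-1} < \infty$.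
   Context: $\mathbb{P}$ denotes the set of primes; $(\mathbb{Z}/p\mathbb{Z})^\times$ the group of units mod $p$. *)

theory Defs
  imports "HOL-Analysis.Analysis" "HOL-Number_Theory.Number_Theory" "HOL-Library.Infinite_Set"
begin

text \<open>The i-th prime, indexed from 1: nth_prime 1 = 2, nth_prime 2 = 3, ...\<close>
definition nth_prime :: "nat \<Rightarrow> nat" where
  "nth_prime i = enumerate {p. prime p} (i - 1)"

definition rsq :: "real \<Rightarrow> nat \<Rightarrow> nat \<Rightarrow> nat \<Rightarrow> nat" where
  "rsq \<gamma> m j0 j = m + (\<Prod>i \<in> {i. j0 \<le> i \<and> real i \<le> 2 powr (real j powr \<gamma>)}. nth_prime i)"

end

theory Submission
  imports Defs
begin

text \<open>
  Every prime \<open>p\<^sub>i\<close> with \<open>j\<^sub>0 \<le> i \<le> 2^(j^\<gamma>)\<close> divides \<open>r\<^sub>j\<^sup>2 - m\<close>. So once \<open>2^(j^\<gamma>)\<close> exceeds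
  the index of a prime \<open>p\<close>, the residue \<open>r\<^sub>j\<^sup>2 mod p\<close> is frozen at \<open>m mod p\<close>, and only the
  \<open>O(log p)\<close> indices \<open>j < log\<^sub>2 p\<close> can contribute further residues.

  A prime \<open>q > max m p\<^sub>j\<^sub>0\<close> dividing \<open>r\<^sub>j\<^sup>2\<close> must exceed \<open>2^(j^\<gamma>)\<close> and every prime of the
  product. If \<open>q\<^sub>0\<close> is the least such prime, the product is at most the primorial of \<open>q\<^sub>0\<close>,
  hence at most \<open>8^q\<^sub>0\<close> (Erdos' middle binomial coefficient argument), so there are at most
  \<open>log\<^sub>q\<^sub>0((m + 1) 8^q\<^sub>0)\<close> such primes and their reciprocals sum to
  \<open>O(1 / log q\<^sub>0) = O(j^-\<gamma>)\<close>, which is summable for \<open>\<gamma> > 1\<close>. The bad primes are these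
  together with the finitely many primes up to \<open>max m p\<^sub>j\<^sub>0\<close>.
\<close>

lemma prime_nth_prime: "prime (nth_prime i)"
  unfolding nth_prime_def using enumerate_in_set[OF primes_infinite] by simp

lemma nth_prime_less_iff: "1 \<le> a \<Longrightarrow> 1 \<le> b \<Longrightarrow> nth_prime a < nth_prime b \<longleftrightarrow> a < b"
  unfolding nth_prime_def by (simp add: primes_infinite less_diff_iff)

lemma nth_prime_le_iff: "1 \<le> a \<Longrightarrow> 1 \<le> b \<Longrightarrow> nth_prime a \<le> nth_prime b \<longleftrightarrow> a \<le> b"
  using nth_prime_less_iff by (meson not_le)

lemma inj_on_nth_prime: "(\<And>i. i \<in> I \<Longrightarrow> 1 \<le> i) \<Longrightarrow> inj_on nth_prime I"
  by (rule inj_onI) (metis nth_prime_le_iff order_antisym order_refl)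

lemma Suc_less_enumerate_primes: "Suc n < enumerate {p::nat. prime p} n"
proof (induction n)
  case 0
  have "prime (enumerate {p::nat. prime p} 0)"
    using enumerate_in_set[OF primes_infinite] by simp
  from prime_ge_2_nat[OF this] show ?case by linarith
next
  case (Suc n)
  then show ?case using enumerate_step[OF primes_infinite, of n] by simp
qed

lemma less_nth_prime: "1 \<le> i \<Longrightarrow> i < nth_prime i"
  unfolding nth_prime_def using Suc_less_enumerate_primes[of "i - 1"] by simp

lemma ex_nth_prime_eq: "prime (q::nat) \<Longrightarrow> \<exists>k\<ge>1. nth_prime k = q"
proof -
  assume "prime q"
  then obtain n where "enumerate {p::nat. prime p} n = q"
    using enumerate_Ex[OF primes_infinite] by blast
  then show ?thesis unfolding nth_prime_def by (intro exI[of _ "Suc n"]) simp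
qed

lemma prod_distinct_primes_dvd:
  fixes A :: "nat set"
  assumes "finite A" "\<And>p. p \<in> A \<Longrightarrow> prime p" "\<And>p. p \<in> A \<Longrightarrow> p dvd n"
  shows "\<Prod>A dvd n"
  using assms
proof (induction A rule: finite_induct)
  case (insert p A)
  have "\<not> p dvd \<Prod>A"
  proof
    assume "p dvd \<Prod>A"
    then obtain q where "q \<in> A" "p dvd q"
      using prime_dvd_prod_iff[OF insert(1), of p "\<lambda>x. x"] insert.prems(1) by auto
    with insert.hyps(2) insert.prems(1) show False by (metis insertI1 insertI2 primes_dvd_imp_eq)
  qed
  then have "coprime p (\<Prod>A)" using insert.prems(1) prime_imp_coprime by auto
  then show ?case using insert by (simp add: divides_mult)
qed simp

lemma prime_dvd_choose_middle:
  assumes "prime p" "k + 1 < p" "p \<le> 2 * k + 1"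
  shows "p dvd (2 * k + 1) choose k"
proof -
  have "fact k * fact (k + 1) * ((2 * k + 1) choose k) = (fact (2 * k + 1) :: nat)"
    using binomial_fact_lemma[of k "2 * k + 1"] by (simp add: mult_2)
  moreover have "p dvd (fact (2 * k + 1) :: nat)"
    using prime_dvd_fact_iff assms by blast
  moreover have "\<not> p dvd (fact k :: nat)" "\<not> p dvd (fact (k + 1) :: nat)"
    using assms prime_dvd_fact_iff[OF assms(1), of k] prime_dvd_fact_iff[OF assms(1), of "k + 1"]
    by linarith+
  ultimately show ?thesis
    using assms(1) by (metis prime_dvd_mult_iff)
qed

lemma prod_primes_upper_half_le:
  "\<Prod>{p::nat. prime p \<and> k + 1 < p \<and> p \<le> 2 * k + 1} \<le> 2 ^ (2 * k + 1)"
proof -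
  have "\<Prod>{p::nat. prime p \<and> k + 1 < p \<and> p \<le> 2 * k + 1} dvd (2 * k + 1) choose k"
    using prime_dvd_choose_middle by (intro prod_distinct_primes_dvd) auto
  then have "\<Prod>{p::nat. prime p \<and> k + 1 < p \<and> p \<le> 2 * k + 1} \<le> (2 * k + 1) choose k"
    by (rule dvd_imp_le) simp
  also have "\<dots> \<le> 2 ^ (2 * k + 1)"
    by (rule binomial_le_pow2)
  finally show ?thesis .
qed

lemma prod_primes_le_8_pow: "\<Prod>{p::nat. prime p \<and> p \<le> n} \<le> 8 ^ n"
proof (induction n rule: less_induct)
  case (less n)
  consider (small) "n < 2" | (two) "n = 2" | (even) "2 < n" "even n"
    | (odd) k where "n = 2 * k + 1" "1 \<le> k"
    by (cases "even n"; cases "n < 2"; cases "n = 2") (auto elim!: oddE)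
  then show ?case
  proof cases
    case small
    then have none: "{p::nat. prime p \<and> p \<le> n} = {}" by (auto dest: prime_ge_2_nat)
    show ?thesis unfolding none by simp
  next
    case two
    then have primes_le_2: "{p::nat. prime p \<and> p \<le> n} = {2}" by (auto dest: prime_ge_2_nat)
    show ?thesis unfolding primes_le_2 using two by simp
  next
    case even
    then have "\<not> prime n" using prime_odd_nat by fastforce
    then have "{p::nat. prime p \<and> p \<le> n} = {p. prime p \<and> p \<le> n - 1}"
      by (auto simp: le_less)
    then have "\<Prod>{p::nat. prime p \<and> p \<le> n} \<le> 8 ^ (n - 1)" using less[of "n - 1"] even by simp
    also have "\<dots> \<le> 8 ^ n" by (simp add: power_increasing)
    finally show ?thesis .
  next
    case (odd k)
    let ?A = "{p::nat. prime p \<and> p \<le> k + 1}" and ?B = "{p::nat. prime p \<and> k + 1 < p \<and> p \<le> n}"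
    have split: "{p::nat. prime p \<and> p \<le> n} = ?A \<union> ?B" using odd by auto
    have "\<Prod>{p::nat. prime p \<and> p \<le> n} = \<Prod>?A * \<Prod>?B"
      unfolding split by (rule prod.union_disjoint) auto
    also have "\<dots> \<le> 8 ^ (k + 1) * 2 ^ (2 * k + 1)"
      using less[of "k + 1"] prod_primes_upper_half_le[of k] odd by (intro mult_mono) auto
    also have "\<dots> = 2 ^ (3 * (k + 1) + (2 * k + 1))"
      by (simp add: power_add power_mult flip: power_mult_distrib)
    also have "\<dots> \<le> 2 ^ (3 * n)"
      using odd by (intro power_increasing) auto
    also have "\<dots> = 8 ^ n"
      by (simp add: power_mult)
    finally show ?thesis .
  qed
qed

lemma prod_le_8_pow_of_primes_le:
  fixes A :: "nat set"
  assumes "\<And>p. p \<in> A \<Longrightarrow> prime p \<and> p \<le> n"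
  shows "\<Prod>A \<le> 8 ^ n"
proof -
  have "\<Prod>A dvd \<Prod>{p::nat. prime p \<and> p \<le> n}"
    by (rule prod_dvd_prod_subset) (use assms in auto)
  then have "\<Prod>A \<le> \<Prod>{p::nat. prime p \<and> p \<le> n}"
    by (rule dvd_imp_le) (auto intro: prod_pos dest: prime_gt_0_nat)
  also have "\<dots> \<le> 8 ^ n" by (rule prod_primes_le_8_pow)
  finally show ?thesis .
qed

lemma sum_inverse_le_of_prod_le:
  fixes S :: "nat set" and c :: real
  assumes "finite S" "\<And>q. q \<in> S \<Longrightarrow> q0 \<le> q" "2 \<le> q0" "1 \<le> c"
    and "real (\<Prod>S) \<le> c * 8 ^ q0"
  shows "(\<Sum>q\<in>S. 1 / real q) \<le> (ln c + ln 8) / ln (real q0)"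
proof -
  have q0: "2 \<le> real q0" "0 < ln (real q0)" using assms(3) by auto
  have q: "\<And>q. q \<in> S \<Longrightarrow> real q0 \<le> real q" using assms(2) by simp
  have "real q0 ^ card S = (\<Prod>q\<in>S. real q0)" by simp
  also have "\<dots> \<le> (\<Prod>q\<in>S. real q)" by (rule prod_mono) (use assms(2) in auto)
  also have "\<dots> \<le> c * 8 ^ q0" using assms(5) by simp
  finally have "ln (real q0 ^ card S) \<le> ln (c * 8 ^ q0)"
    using q0 assms(4) by (subst ln_le_cancel_iff) auto
  then have card_S: "real (card S) * ln (real q0) \<le> ln c + real q0 * ln 8"
    using q0 assms(4) by (simp add: ln_realpow ln_mult)
  have "(\<Sum>q\<in>S. 1 / real q) \<le> (\<Sum>q\<in>S. 1 / real q0)"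
    using q q0(1) by (intro sum_mono) (simp add: frac_le)
  also have "\<dots> = real (card S) / real q0" by simp
  also have "\<dots> \<le> (ln c / real q0 + ln 8) / ln (real q0)"
    using card_S q0 by (simp add: field_simps)
  also have "\<dots> \<le> (ln c + ln 8) / ln (real q0)"
    using q0 ln_ge_zero[OF assms(4)]
    by (intro divide_right_mono add_right_mono) (auto simp: divide_le_eq mult_le_cancel_left1)
  finally show ?thesis .
qed

lemma nonneg_summable_on_UN:
  fixes f :: "'a \<Rightarrow> real" and b :: "nat \<Rightarrow> real"
  assumes "\<And>x. 0 \<le> f x" "\<And>j. j \<in> J \<Longrightarrow> finite (A j)" "\<And>j. j \<in> J \<Longrightarrow> sum f (A j) \<le> b j"
    and "\<And>j. 0 \<le> b j" "summable b"
  shows "f summable_on (\<Union>j\<in>J. A j)"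
proof (rule nonneg_bdd_above_summable_on)
  show "bdd_above (sum f ` {F. F \<subseteq> (\<Union>j\<in>J. A j) \<and> finite F})"
  proof (rule bdd_aboveI2)
    fix F assume F: "F \<in> {F. F \<subseteq> (\<Union>j\<in>J. A j) \<and> finite F}"
    then obtain idx where idx: "\<And>x. x \<in> F \<Longrightarrow> idx x \<in> J \<and> x \<in> A (idx x)"
      by (metis UN_E subsetD mem_Collect_eq)
    define J' where "J' = J \<inter> {..Max (idx ` F)}"
    have "finite J'" "finite (Sigma J' A)" using assms(2) by (auto simp: J'_def)
    have "F \<subseteq> snd ` Sigma J' A"
      using F idx by (force simp: J'_def intro!: image_eqI[of _ snd "(idx x, x)" for x])
    then have "sum f F \<le> sum f (snd ` Sigma J' A)"
      using \<open>finite (Sigma J' A)\<close> assms(1,2) by (intro sum_mono2) (auto simp: J'_def)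
    also have "\<dots> \<le> sum (f \<circ> snd) (Sigma J' A)"
      using \<open>finite (Sigma J' A)\<close> assms(1,2) by (intro sum_image_le) (auto simp: J'_def)
    also have "\<dots> = (\<Sum>j\<in>J'. sum f (A j))"
      using \<open>finite J'\<close> assms(2) by (subst sum.Sigma) (auto simp: J'_def split_def)
    also have "\<dots> \<le> sum b J'"
      using assms(3) by (intro sum_mono) (auto simp: J'_def)
    also have "\<dots> \<le> suminf b"
      using \<open>finite J'\<close> assms(4,5) by (intro sum_le_suminf) auto
    finally show "sum f F \<le> suminf b" .
  qed
qed (use assms(1) in simp)

lemma card_image_le_of_eventually_const:
  assumes "\<And>j. n \<le> j \<Longrightarrow> g j = c"
  shows "card (g ` A) \<le> Suc n"
proof -
  have "g ` A \<subseteq> insert c (g ` {..<n})"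
    using assms by (auto simp: not_less[symmetric])
  then have "card (g ` A) \<le> card (insert c (g ` {..<n}))"
    by (intro card_mono) auto
  also have "\<dots> \<le> Suc (card (g ` {..<n}))"
    by (simp add: card_insert_if)
  also have "\<dots> \<le> Suc n"
    using card_image_le[of "{..<n}" g] by simp
  finally show ?thesis .
qed

lemma mod_in_Units_residue_ring:
  assumes "prime p" "\<not> p dvd n"
  shows "int n mod int p \<in> Units (residue_ring (int p))"
proof -
  have "residues_prime p" using assms(1) by (simp add: residues_prime_def)
  then have units: "Units (residue_ring (int p)) = {1..int p - 1}"
    using prime_gt_0_nat[OF assms(1)] by (simp add: residues_prime.res_prime_units_eq of_nat_diff)
  have "int n mod int p \<noteq> 0" using assms(2) by (simp add: dvd_eq_mod_eq_0 flip: of_nat_mod)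
  moreover have "0 \<le> int n mod int p" "int n mod int p < int p"
    using prime_gt_0_nat[OF assms(1)] by simp_all
  ultimately show ?thesis unfolding units by simp
qed

definition rsq_indices :: "real \<Rightarrow> nat \<Rightarrow> nat \<Rightarrow> nat set" where
  "rsq_indices \<gamma> j0 j = {i. j0 \<le> i \<and> real i \<le> 2 powr (real j powr \<gamma>)}"

definition rsq_large_prime_divisors :: "real \<Rightarrow> nat \<Rightarrow> nat \<Rightarrow> nat \<Rightarrow> nat set" where
  "rsq_large_prime_divisors \<gamma> m j0 j = {q. prime q \<and> q dvd rsq \<gamma> m j0 j \<and>
     (\<forall>i\<in>rsq_indices \<gamma> j0 j. nth_prime i < q) \<and> 2 powr (real j powr \<gamma>) < real q}"

lemma rsq_eq_plus_prod: "rsq \<gamma> m j0 j = m + prod nth_prime (rsq_indices \<gamma> j0 j)"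
  by (simp add: rsq_def rsq_indices_def)

lemma finite_rsq_indices: "finite (rsq_indices \<gamma> j0 j)"
proof (rule finite_subset)
  show "rsq_indices \<gamma> j0 j \<subseteq> {..nat \<lceil>2 powr (real j powr \<gamma>)\<rceil>}"
  proof
    fix i assume "i \<in> rsq_indices \<gamma> j0 j"
    then have "real i \<le> 2 powr (real j powr \<gamma>)" by (simp add: rsq_indices_def)
    also have "\<dots> \<le> real (nat \<lceil>2 powr (real j powr \<gamma>)\<rceil>)" by (rule real_nat_ceiling_ge)
    finally show "i \<in> {..nat \<lceil>2 powr (real j powr \<gamma>)\<rceil>}" by simp
  qed
qed simp

lemma rsq_pos: "0 < rsq \<gamma> m j0 j"
  using prime_gt_0_nat[OF prime_nth_prime] by (simp add: rsq_eq_plus_prod prod_pos)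

lemma finite_rsq_large_prime_divisors: "finite (rsq_large_prime_divisors \<gamma> m j0 j)"
proof (rule finite_subset)
  show "rsq_large_prime_divisors \<gamma> m j0 j \<subseteq> {..rsq \<gamma> m j0 j}"
    using dvd_imp_le rsq_pos by (auto simp: rsq_large_prime_divisors_def)
qed simp

lemma rsq_mod_nth_prime:
  assumes "k \<in> rsq_indices \<gamma> j0 j"
  shows "rsq \<gamma> m j0 j mod nth_prime k = m mod nth_prime k"
proof -
  have "nth_prime k dvd prod nth_prime (rsq_indices \<gamma> j0 j)"
    by (rule dvd_prodI[OF finite_rsq_indices assms])
  then show ?thesis by (auto simp: rsq_eq_plus_prod elim!: dvdE)
qed

lemma sum_inverse_rsq_large_prime_divisors:
  assumes "0 \<le> \<gamma>" "1 \<le> j0" "1 \<le> j"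
  shows "(\<Sum>q\<in>rsq_large_prime_divisors \<gamma> m j0 j. 1 / real q)
    \<le> (ln (real m + 1) + ln 8) / ln 2 * real j powr (-\<gamma>)"
proof (cases "rsq_large_prime_divisors \<gamma> m j0 j = {}")
  case False
  define S where "S = rsq_large_prime_divisors \<gamma> m j0 j"
  define L where "L = (2::real) powr (real j powr \<gamma>)"
  define q0 where "q0 = Min S"
  have "finite S" by (simp add: S_def finite_rsq_large_prime_divisors)
  with False have "q0 \<in> S" and q0_le: "\<And>q. q \<in> S \<Longrightarrow> q0 \<le> q"
    by (simp_all add: S_def q0_def)
  then have q0: "L < real q0" "\<And>i. i \<in> rsq_indices \<gamma> j0 j \<Longrightarrow> nth_prime i < q0"
    by (simp_all add: S_def rsq_large_prime_divisors_def L_def)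
  have "1 \<le> real j powr \<gamma>" using assms by (simp add: ge_one_powr_ge_zero)
  then have L: "2 \<le> L" using powr_mono[of 1 "real j powr \<gamma>" 2] by (simp add: L_def)
  have "prod nth_prime (rsq_indices \<gamma> j0 j) = \<Prod>(nth_prime ` rsq_indices \<gamma> j0 j)"
    using assms(2) by (subst prod.reindex) (auto intro: inj_on_nth_prime simp: rsq_indices_def)
  also have "\<dots> \<le> 8 ^ q0"
    using q0(2) prime_nth_prime by (intro prod_le_8_pow_of_primes_le) (auto simp: less_imp_le)
  finally have "rsq \<gamma> m j0 j \<le> m + 8 ^ q0"
    by (simp add: rsq_eq_plus_prod)
  moreover have "\<Prod>S \<le> rsq \<gamma> m j0 j"
    using \<open>finite S\<close> rsq_pos
    by (intro dvd_imp_le prod_distinct_primes_dvd) (auto simp: S_def rsq_large_prime_divisors_def)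
  ultimately have "\<Prod>S \<le> m + 8 ^ q0" by linarith
  then have "real (\<Prod>S) \<le> real m + 8 ^ q0"
    using of_nat_mono by fastforce
  also have "\<dots> \<le> (real m + 1) * 8 ^ q0"
    using one_le_power[of "8::real" q0] by (simp add: algebra_simps mult_le_cancel_left1)
  finally have "real (\<Prod>S) \<le> (real m + 1) * 8 ^ q0" .
  then have "(\<Sum>q\<in>S. 1 / real q) \<le> (ln (real m + 1) + ln 8) / ln (real q0)"
    using \<open>finite S\<close> q0_le q0(1) L by (intro sum_inverse_le_of_prod_le) auto
  also have "\<dots> \<le> (ln (real m + 1) + ln 8) / ln L"
  proof (rule divide_left_mono)
    have "0 < ln L" "ln L \<le> ln (real q0)" using q0(1) L by auto
    then show "ln L \<le> ln (real q0)" "0 < ln (real q0) * ln L" by auto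
  qed simp
  also have "ln L = ln 2 * real j powr \<gamma>"
    by (simp add: L_def ln_powr)
  finally show ?thesis
    by (simp add: S_def powr_minus_divide)
qed simp

lemma large_prime_dvd_rsq_in_large_prime_divisors:
  assumes "1 \<le> m" "1 \<le> j0" "prime q" "max m (nth_prime j0) < q" "q dvd rsq \<gamma> m j0 j"
  shows "q \<in> rsq_large_prime_divisors \<gamma> m j0 j"
proof -
  obtain k where k: "1 \<le> k" "nth_prime k = q" using ex_nth_prime_eq[OF assms(3)] by blast
  then have "j0 < k" using nth_prime_less_iff[OF assms(2) k(1)] assms(4) by simp
  have "k \<notin> rsq_indices \<gamma> j0 j"
  proof
    assume "k \<in> rsq_indices \<gamma> j0 j"
    then have "q dvd m"
      using rsq_mod_nth_prime[of k \<gamma> j0 j m] assms(5) k(2) by (simp add: dvd_eq_mod_eq_0)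
    with assms(1,4) show False by (simp add: dvd_imp_le leD)
  qed
  with \<open>j0 < k\<close> have k_large: "2 powr (real j powr \<gamma>) < real k"
    by (simp add: rsq_indices_def)
  have "nth_prime i < q" if "i \<in> rsq_indices \<gamma> j0 j" for i
    using that k k_large assms(2) by (auto simp: rsq_indices_def nth_prime_less_iff)
  moreover have "real k < real q" using less_nth_prime[OF k(1)] k(2) by simp
  ultimately show ?thesis
    using assms(3,5) k_large by (simp add: rsq_large_prime_divisors_def)
qed

lemma rsq_mod_eq_of_log_le:
  assumes "1 \<le> \<gamma>" "1 \<le> j0" "j0 \<le> k" "log 2 (real (nth_prime k)) \<le> real j"
  shows "rsq \<gamma> m j0 j mod nth_prime k = m mod nth_prime k"
proof (rule rsq_mod_nth_prime)
  have p: "2 \<le> nth_prime k" using prime_ge_2_nat[OF prime_nth_prime] .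
  then have "1 \<le> log 2 (real (nth_prime k))" by simp
  then have "1 \<le> real j" using assms(4) by linarith
  then have "real j \<le> real j powr \<gamma>" using powr_mono[OF assms(1), of "real j"] by simp
  have "real k < real (nth_prime k)" using less_nth_prime assms(2,3) by simp
  also have "\<dots> = 2 powr log 2 (real (nth_prime k))" using p by simp
  also have "\<dots> \<le> 2 powr (real j powr \<gamma>)"
    using assms(4) \<open>real j \<le> real j powr \<gamma>\<close> by simp
  finally show "k \<in> rsq_indices \<gamma> j0 j" using assms(3) by (simp add: rsq_indices_def)
qed

lemma card_rsq_residues_le:
  assumes "1 \<le> \<gamma>" "1 \<le> j0" "prime p"
  shows "real (card ((\<lambda>j. rsq \<gamma> m j0 j mod p) ` {j. j \<ge> 1}))
    \<le> real (nth_prime j0) + 2 + log 2 (real p)"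
proof -
  let ?R = "(\<lambda>j. rsq \<gamma> m j0 j mod p) ` {j. j \<ge> 1}"
  obtain k where k: "1 \<le> k" "nth_prime k = p" using ex_nth_prime_eq[OF assms(3)] by blast
  have "2 \<le> p" using prime_ge_2_nat[OF assms(3)] .
  then have log_p: "1 \<le> log 2 (real p)" by simp
  show ?thesis
  proof (cases "k < j0")
    case True
    have "?R \<subseteq> {..<p}" using \<open>2 \<le> p\<close> by auto
    then have "card ?R \<le> p" using card_mono[of "{..<p}" ?R] by simp
    moreover have "p < nth_prime j0" using True k nth_prime_less_iff[OF k(1) assms(2)] by simp
    ultimately show ?thesis using log_p by linarith
  next
    case False
    have "card ?R \<le> Suc (nat \<lceil>log 2 (real p)\<rceil>)"
    proof (rule card_image_le_of_eventually_const)
      fix j assume "nat \<lceil>log 2 (real p)\<rceil> \<le> j"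
      then have "real (nat \<lceil>log 2 (real p)\<rceil>) \<le> real j" by simp
      then have "log 2 (real p) \<le> real j"
        using real_nat_ceiling_ge[of "log 2 (real p)"] by linarith
      then show "rsq \<gamma> m j0 j mod p = m mod p"
        using rsq_mod_eq_of_log_le[OF assms(1,2), of k j] False k(2) by simp
    qed
    then show ?thesis using log_p by linarith
  qed
qed

lemma card_rsq_residues_le_ln:
  assumes "1 \<le> \<gamma>" "1 \<le> j0" "prime p"
  shows "real (card ((\<lambda>j. rsq \<gamma> m j0 j mod p) ` {j. j \<ge> 1}))
    \<le> (real (nth_prime j0) + 3) / ln 2 * ln (real p)"
proof -
  have log_p: "1 \<le> log 2 (real p)" using prime_ge_2_nat[OF assms(3)] by simp
  have "real (card ((\<lambda>j. rsq \<gamma> m j0 j mod p) ` {j. j \<ge> 1}))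
    \<le> real (nth_prime j0) + 2 + log 2 (real p)"
    by (rule card_rsq_residues_le[OF assms])
  also have "\<dots> \<le> (real (nth_prime j0) + 3) * log 2 (real p)"
    using log_p mult_left_mono[OF log_p, of "real (nth_prime j0) + 2"] by (simp add: algebra_simps)
  also have "\<dots> = (real (nth_prime j0) + 3) / ln 2 * ln (real p)"
    by (simp add: log_def)
  finally show ?thesis .
qed

lemma card_rsq_residues_le_powr:
  assumes "1 \<le> \<gamma>" "1 \<le> j0" "prime p" "0 < \<epsilon>"
  shows "real (card ((\<lambda>j. rsq \<gamma> m j0 j mod p) ` {j. j \<ge> 1}))
    \<le> (real (nth_prime j0) + 3) / ln 2 / \<epsilon> * real p powr \<epsilon>"
proof -
  have "real (card ((\<lambda>j. rsq \<gamma> m j0 j mod p) ` {j. j \<ge> 1}))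
    \<le> (real (nth_prime j0) + 3) / ln 2 * ln (real p)"
    by (rule card_rsq_residues_le_ln[OF assms(1-3)])
  also have "\<dots> \<le> (real (nth_prime j0) + 3) / ln 2 * (real p powr \<epsilon> / \<epsilon>)"
    using assms(4) prime_gt_0_nat[OF assms(3)] by (intro mult_left_mono ln_powr_bound) auto
  finally show ?thesis by simp
qed

definition rsq_bad_primes :: "real \<Rightarrow> nat \<Rightarrow> nat \<Rightarrow> nat set" where
  "rsq_bad_primes \<gamma> m j0 = {q. prime q \<and> q \<le> max m (nth_prime j0)}
     \<union> (\<Union>j\<in>{j. j \<ge> 1}. rsq_large_prime_divisors \<gamma> m j0 j)"

lemma rsq_bad_primes_subset_primes: "rsq_bad_primes \<gamma> m j0 \<subseteq> {p. prime p}"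
  by (auto simp: rsq_bad_primes_def rsq_large_prime_divisors_def)

lemma rsq_mod_in_Units:
  assumes "1 \<le> m" "1 \<le> j0" "prime p" "p \<notin> rsq_bad_primes \<gamma> m j0" "1 \<le> j"
  shows "int (rsq \<gamma> m j0 j) mod int p \<in> Units (residue_ring (int p))"
proof (rule mod_in_Units_residue_ring[OF assms(3)])
  have "max m (nth_prime j0) < p" "p \<notin> rsq_large_prime_divisors \<gamma> m j0 j"
    using assms(3-5) by (auto simp: rsq_bad_primes_def)
  then show "\<not> p dvd rsq \<gamma> m j0 j"
    using large_prime_dvd_rsq_in_large_prime_divisors assms(1-3) by blast
qed

lemma summable_on_inverse_rsq_bad_primes:
  assumes "1 < \<gamma>" "1 \<le> j0"
  shows "(\<lambda>q. 1 / real q) summable_on rsq_bad_primes \<gamma> m j0"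
proof -
  define K where "K = (ln (real m + 1) + ln 8) / ln 2"
  have "(\<lambda>q. 1 / real q) summable_on (\<Union>j\<in>{j. j \<ge> 1}. rsq_large_prime_divisors \<gamma> m j0 j)"
  proof (rule nonneg_summable_on_UN)
    show "summable (\<lambda>j. K * real j powr (-\<gamma>))"
      using assms(1) by (intro summable_mult) (simp add: summable_real_powr_iff)
    show "0 \<le> K * real j powr (-\<gamma>)" for j
      by (simp add: K_def)
    show "sum (\<lambda>q. 1 / real q) (rsq_large_prime_divisors \<gamma> m j0 j) \<le> K * real j powr (-\<gamma>)"
      if "j \<in> {j. j \<ge> 1}" for j
      using sum_inverse_rsq_large_prime_divisors[of \<gamma> j0 j m] assms that by (simp add: K_def)
  qed (simp_all add: finite_rsq_large_prime_divisors)
  moreover have "finite {q. prime q \<and> q \<le> max m (nth_prime j0)}"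
    by simp
  ultimately show ?thesis
    unfolding rsq_bad_primes_def by (intro summable_on_union) simp_all
qed

theorem theorem2:
  fixes \<gamma> :: real and m j0 :: nat
  assumes "\<gamma> > 1" and "m \<ge> 1" and "j0 \<ge> 1"
  shows "\<exists>PG PB :: nat set.
     {p. prime p} = PG \<union> PB \<and>
     (\<forall>p\<in>PG. \<forall>j\<ge>1. int (rsq \<gamma> m j0 j) mod int p \<in> Units (residue_ring (int p))) \<and>
     (\<forall>\<epsilon>>0. \<exists>C::real. \<forall>p. prime p \<longrightarrow>
        finite ((\<lambda>j. rsq \<gamma> m j0 j mod p) ` {j. j \<ge> 1}) \<and>
        real (card ((\<lambda>j. rsq \<gamma> m j0 j mod p) ` {j. j \<ge> 1})) \<le> C * real p powr \<epsilon>) \<and>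
     (\<exists>C::real. \<forall>p. prime p \<longrightarrow>
        real (card ((\<lambda>j. rsq \<gamma> m j0 j mod p) ` {j. j \<ge> 1})) \<le> C * ln (real p)) \<and>
     (\<lambda>p. 1 / real p) summable_on PB"
proof (intro exI conjI)
  let ?PB = "rsq_bad_primes \<gamma> m j0" and ?C = "(real (nth_prime j0) + 3) / ln 2"
  let ?R = "\<lambda>p. (\<lambda>j. rsq \<gamma> m j0 j mod p) ` {j. j \<ge> 1}"
  have "1 \<le> \<gamma>" using assms(1) by simp
  have finite_R: "finite (?R p)" if "prime p" for p
    using prime_gt_0_nat[OF that] by (auto intro: finite_subset[of _ "{..<p}"])
  show "{p. prime p} = ({p. prime p} - ?PB) \<union> ?PB"
    using rsq_bad_primes_subset_primes by blast
  show "\<forall>p\<in>{p. prime p} - ?PB. \<forall>j\<ge>1. int (rsq \<gamma> m j0 j) mod int p \<in> Units (residue_ring (int p))"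
    using rsq_mod_in_Units assms(2,3) by blast
  show "\<forall>\<epsilon>>0. \<exists>C. \<forall>p. prime p \<longrightarrow> finite (?R p) \<and> real (card (?R p)) \<le> C * real p powr \<epsilon>"
    using finite_R card_rsq_residues_le_powr[OF \<open>1 \<le> \<gamma>\<close> assms(3)] by blast
  show "\<forall>p. prime p \<longrightarrow> real (card (?R p)) \<le> ?C * ln (real p)"
    using card_rsq_residues_le_ln[OF \<open>1 \<le> \<gamma>\<close> assms(3)] by blast
  show "(\<lambda>p. 1 / real p) summable_on ?PB"
    by (rule summable_on_inverse_rsq_bad_primes[OF assms(1,3)])
qed

end
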